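(* For every parameter budget $p\ge 0$, the set $A_p=\{A : A \text{ is a valid architecture and } \mathrm{numParams}(A)\le p\}$ is finite.
   Context: Fix an input $X\in\mathbb{R}^{H\times W\times C}$ with $H,W,C\in\mathbb{N}^+$ fixed. An architecture $A$ is a finite sequence of layers $l_1,\dots,l_N$ applied in order to the input. Each layer is of one of three kinds: (i) an activation function $\sigma$ drawn from a fixed finite set $\Sigma$ (e.g. sigmoid, ReLU, softmax), which has no parameters and does not change the spatial dimensions; (ii) a non-parametric pooling layer $q_s$ (e.g. max or average pooling) with stride $s$ and kernel size $k$, which has no parameters and, having no padding, reduces each spatial dimension of its input by at least one pixel; (iii) a parametric layer $f_\theta$ (convolution, batch normalization, fully connected), with parameter vector $\theta$ of size $|\theta|\in\mathbb{N}^+$, which does not increase spatial dimensions. For a given input shape there are only finitely many choices of pooling layer producing a valid (positive) output size, and for each $n$ only finitely many choices of parametric layer with $|\theta|\le n$. Standing assumption: if $l_i\in\Sigma$ then $l_{i+1}\notin\Sigma$ (no two consecutive activations). An architecture is valid if every intermediate spatial dimension is a positive integer. $\mathrm{numParams}(A)=\sum_i |\theta_i|$, summing over the parametric layers of $A$. *)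

theory Defs
  imports Main
begin

text \<open>A spatial shape is a pair (height, width) of
integers (integers so that an invalid, non-positive size can be represented).
Layers are activations (from a type 's, restricted to a finite set Sig), pooling
layers (abstract descriptors of type 'q, with output-shape function pout) and
parametric layers (abstract descriptors of type 'f, with output-shape function fout
and parameter count psize).\<close>

datatype ('s, 'q, 'f) layer = Act 's | Pool 'q | Param 'f

fun apply_layer ::
  "('q \<Rightarrow> int \<times> int \<Rightarrow> int \<times> int) \<Rightarrow> ('f \<Rightarrow> int \<times> int \<Rightarrow> int \<times> int)
   \<Rightarrow> ('s, 'q, 'f) layer \<Rightarrow> int \<times> int \<Rightarrow> int \<times> int" where
  "apply_layer pout fout (Act s) d = d"
| "apply_layer pout fout (Pool q) d = pout q d"
| "apply_layer pout fout (Param f) d = fout f d"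

fun valid_from ::
  "('q \<Rightarrow> int \<times> int \<Rightarrow> int \<times> int) \<Rightarrow> ('f \<Rightarrow> int \<times> int \<Rightarrow> int \<times> int)
   \<Rightarrow> int \<times> int \<Rightarrow> ('s, 'q, 'f) layer list \<Rightarrow> bool" where
  "valid_from pout fout d [] = True"
| "valid_from pout fout d (l # ls) =
     (let d' = apply_layer pout fout l d
      in fst d' > 0 \<and> snd d' > 0 \<and> valid_from pout fout d' ls)"

definition is_act :: "('s, 'q, 'f) layer \<Rightarrow> bool" where
  "is_act l = (case l of Act _ \<Rightarrow> True | _ \<Rightarrow> False)"

definition valid_arch ::
  "'s set \<Rightarrow> ('q \<Rightarrow> int \<times> int \<Rightarrow> int \<times> int) \<Rightarrow> ('f \<Rightarrow> int \<times> int \<Rightarrow> int \<times> int)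
   \<Rightarrow> int \<Rightarrow> int \<Rightarrow> ('s, 'q, 'f) layer list \<Rightarrow> bool" where
  "valid_arch Sig pout fout H W A \<longleftrightarrow>
     (\<forall>s. Act s \<in> set A \<longrightarrow> s \<in> Sig) \<and>
     (\<forall>i. Suc i < length A \<longrightarrow> is_act (A ! i) \<longrightarrow> \<not> is_act (A ! Suc i)) \<and>
     valid_from pout fout (H, W) A"

definition layer_params :: "('f \<Rightarrow> nat) \<Rightarrow> ('s, 'q, 'f) layer \<Rightarrow> nat" where
  "layer_params psize l = (case l of Param f \<Rightarrow> psize f | _ \<Rightarrow> 0)"

definition numParams :: "('f \<Rightarrow> nat) \<Rightarrow> ('s, 'q, 'f) layer list \<Rightarrow> nat" where
  "numParams psize A = sum_list (map (layer_params psize) A)"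

end

(* Along a valid architecture the height never grows and stays positive, each pooling layer
   lowers it by at least one and each parametric layer costs at least one parameter; so there
   are fewer than H + p non-activation layers, and as activations are never adjacent, fewer than
   2 (H + p) layers in all. Moreover every layer is drawn from a finite alphabet: activations
   from Sig, parametric layers of size at most p, and pooling layers giving a positive output
   on some input shape inside H x W. Finitely many lists of bounded length remain. *)

theory Submission
  imports Defs
begin

lemma no_adjacent_Cons_tail:
  assumes "\<forall>i. Suc i < length (x # xs) \<longrightarrow> P ((x # xs) ! i) \<longrightarrow> \<not> P ((x # xs) ! Suc i)"
  shows "\<forall>i. Suc i < length xs \<longrightarrow> P (xs ! i) \<longrightarrow> \<not> P (xs ! Suc i)"
  using assms by (metis Suc_less_eq length_Cons nth_Cons_Suc)

lemma no_adjacent_length_le: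
  assumes "\<forall>i. Suc i < length xs \<longrightarrow> P (xs ! i) \<longrightarrow> \<not> P (xs ! Suc i)"
  shows "length xs \<le> 2 * length (filter (\<lambda>x. \<not> P x) xs) + 1"
  using assms
proof (induction xs rule: induct_list012)
  case (3 x y zs)
  note IH_tail = "3.IH"(2)[OF no_adjacent_Cons_tail[OF "3.prems"]]
  note IH_tail_tail = "3.IH"(1)[OF no_adjacent_Cons_tail[OF no_adjacent_Cons_tail[OF "3.prems"]]]
  show ?case
  proof (cases "P x")
    case True
    with "3.prems" have "\<not> P y" by fastforce
    with True IH_tail_tail show ?thesis by simp
  next
    case False
    with IH_tail show ?thesis by simp
  qed
qed simp_all

lemma numParams_Nil [simp]: "numParams psize [] = 0"
  and numParams_Cons [simp]: "numParams psize (l # ls) = layer_params psize l + numParams psize ls"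
  by (simp_all add: numParams_def)

lemma param_size_le_numParams:
  assumes "Param f \<in> set A"
  shows "psize f \<le> numParams psize A"
  using assms by (induction A) (auto simp: layer_params_def)

lemma apply_layer_le:
  assumes "\<And>q h w. fst (pout q (h, w)) \<le> h - 1 \<and> snd (pout q (h, w)) \<le> w - 1"
    and "\<And>f h w. fst (fout f (h, w)) \<le> h \<and> snd (fout f (h, w)) \<le> w"
  shows "fst (apply_layer pout fout l (h, w)) \<le> h \<and> snd (apply_layer pout fout l (h, w)) \<le> w"
  using assms(1)[of _ h w] assms(2)[of _ h w] by (cases l) (auto simp: less_imp_le)

lemma non_acts_less_height_plus_numParams:
  assumes pool_shrink: "\<And>q h w. fst (pout q (h, w)) \<le> h - 1"
    and param_noinc: "\<And>f h w. fst (fout f (h, w)) \<le> h"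
    and param_pos: "\<And>f. psize f \<ge> 1"
    and "valid_from pout fout (h, w) A" and "h > 0"
  shows "length (filter (\<lambda>l. \<not> is_act l) A) < nat h + numParams psize A"
  using assms(4,5)
proof (induction A arbitrary: h w)
  case (Cons l ls)
  obtain h' w' where step: "apply_layer pout fout l (h, w) = (h', w')"
    by fastforce
  with Cons.prems have "valid_from pout fout (h', w') ls" "h' > 0"
    by (simp_all add: Let_def)
  note IH = Cons.IH[OF this]
  show ?case
  proof (cases l)
    case (Pool q)
    with step pool_shrink[of q h w] have "h' \<le> h - 1" by simp
    with IH Pool \<open>h' > 0\<close> show ?thesis by (simp add: is_act_def layer_params_def)
  next
    case (Param f)
    with step param_noinc[of f h w] have "h' \<le> h" by simp
    with IH Param \<open>h' > 0\<close> param_pos[of f] show ?thesis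
      by (simp add: is_act_def layer_params_def)
  qed (use IH step in \<open>simp add: is_act_def layer_params_def\<close>)
qed simp

definition admissible_pools :: "('q \<Rightarrow> int \<times> int \<Rightarrow> int \<times> int) \<Rightarrow> int \<Rightarrow> int \<Rightarrow> 'q set" where
  "admissible_pools pout H W =
     {q. \<exists>h\<in>{1..H}. \<exists>w\<in>{1..W}. 0 < fst (pout q (h, w)) \<and> 0 < snd (pout q (h, w))}"

lemma finite_admissible_pools:
  assumes "\<And>h w. h > 0 \<Longrightarrow> w > 0 \<Longrightarrow>
      finite {q. fst (pout q (h, w)) > 0 \<and> snd (pout q (h, w)) > 0}"
  shows "finite (admissible_pools pout H W)"
proof -
  have "admissible_pools pout H W =
      (\<Union>(h, w)\<in>{1..H} \<times> {1..W}. {q. fst (pout q (h, w)) > 0 \<and> snd (pout q (h, w)) > 0})"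
    by (auto simp: admissible_pools_def)
  with assms show ?thesis by auto
qed

lemma valid_from_pool_admissible:
  assumes pool_shrink: "\<And>q h w. fst (pout q (h, w)) \<le> h - 1 \<and> snd (pout q (h, w)) \<le> w - 1"
    and param_noinc: "\<And>f h w. fst (fout f (h, w)) \<le> h \<and> snd (fout f (h, w)) \<le> w"
    and "valid_from pout fout (h, w) A" and "Pool q \<in> set A"
  shows "q \<in> admissible_pools pout h w"
  using assms(3,4)
proof (induction A arbitrary: h w)
  case (Cons l ls)
  obtain h' w' where step: "apply_layer pout fout l (h, w) = (h', w')"
    by fastforce
  with Cons.prems have valid: "valid_from pout fout (h', w') ls" "h' > 0" "w' > 0"
    by (simp_all add: Let_def)
  show ?case
  proof (cases "l = Pool q")
    case True
    with step valid have "0 < fst (pout q (h, w))" "0 < snd (pout q (h, w))"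
      by simp_all
    moreover from this pool_shrink[of q h w] have "h \<in> {1..h}" "w \<in> {1..w}"
      by simp_all
    ultimately show ?thesis
      unfolding admissible_pools_def by blast
  next
    case False
    with Cons.prems have "q \<in> admissible_pools pout h' w'"
      using Cons.IH[OF valid(1)] by simp
    then obtain h'' w'' where "h'' \<in> {1..h'}" "w'' \<in> {1..w'}"
      and "0 < fst (pout q (h'', w''))" "0 < snd (pout q (h'', w''))"
      unfolding admissible_pools_def by blast
    moreover have "h' \<le> h" "w' \<le> w"
      using apply_layer_le[of pout fout l h w, OF pool_shrink param_noinc] step by simp_all
    ultimately show ?thesis
      unfolding admissible_pools_def by (intro CollectI bexI[of _ h''] bexI[of _ w'']) auto
  qed
qed simp

lemma valid_arch_length_less:
  assumes "\<And>q h w. fst (pout q (h, w)) \<le> h - 1"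
    and "\<And>f h w. fst (fout f (h, w)) \<le> h"
    and "\<And>f. psize f \<ge> 1"
    and "H > 0" and "valid_arch Sig pout fout H W A"
  shows "length A < 2 * (nat H + numParams psize A)"
proof -
  from assms(5) have "length A \<le> 2 * length (filter (\<lambda>l. \<not> is_act l) A) + 1"
    unfolding valid_arch_def by (blast intro: no_adjacent_length_le)
  moreover have "length (filter (\<lambda>l. \<not> is_act l) A) < nat H + numParams psize A"
    using non_acts_less_height_plus_numParams[of pout fout psize H W A, OF assms(1-3)] assms(4,5)
    unfolding valid_arch_def by simp
  ultimately show ?thesis by simp
qed

lemma valid_arch_set_subset:
  assumes "\<And>q h w. fst (pout q (h, w)) \<le> h - 1 \<and> snd (pout q (h, w)) \<le> w - 1"
    and "\<And>f h w. fst (fout f (h, w)) \<le> h \<and> snd (fout f (h, w)) \<le> w"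
    and "valid_arch Sig pout fout H W A"
  shows "set A \<subseteq> Act ` Sig \<union> Pool ` admissible_pools pout H W
    \<union> Param ` {f. psize f \<le> numParams psize A}"
proof
  fix l assume l: "l \<in> set A"
  show "l \<in> Act ` Sig \<union> Pool ` admissible_pools pout H W
    \<union> Param ` {f. psize f \<le> numParams psize A}"
  proof (cases l)
    case (Pool q)
    with l assms(3) have "q \<in> admissible_pools pout H W"
      unfolding valid_arch_def
      using valid_from_pool_admissible[of pout fout H W A q, OF assms(1,2)] by simp
    with Pool show ?thesis by blast
  qed (use l assms(3) in \<open>auto simp: valid_arch_def intro: param_size_le_numParams\<close>)
qed

theorem theorem1:
  fixes Sig :: "'s set"
    and pout :: "'q \<Rightarrow> int \<times> int \<Rightarrow> int \<times> int"
    and fout :: "'f \<Rightarrow> int \<times> int \<Rightarrow> int \<times> int"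
    and psize :: "'f \<Rightarrow> nat"
    and H W :: int
    and p :: nat
  assumes "finite Sig"
    and "H > 0" and "W > 0"
    and pool_shrink: "\<And>q h w. fst (pout q (h, w)) \<le> h - 1 \<and> snd (pout q (h, w)) \<le> w - 1"
    and pool_finite: "\<And>h w. h > 0 \<Longrightarrow> w > 0 \<Longrightarrow>
           finite {q. fst (pout q (h, w)) > 0 \<and> snd (pout q (h, w)) > 0}"
    and param_noinc: "\<And>f h w. fst (fout f (h, w)) \<le> h \<and> snd (fout f (h, w)) \<le> w"
    and param_pos: "\<And>f. psize f \<ge> 1"
    and param_finite: "\<And>n. finite {f. psize f \<le> n}"
  shows "finite {A. valid_arch Sig pout fout H W A \<and> numParams psize A \<le> p}"
proof -
  define B where "B = Act ` Sig \<union> Pool ` admissible_pools pout H W \<union> Param ` {f. psize f \<le> p}"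
  have "finite B"
    unfolding B_def using \<open>finite Sig\<close> finite_admissible_pools[of pout H W] pool_finite param_finite
    by simp
  moreover have "set A \<subseteq> B \<and> length A \<le> 2 * (nat H + p)"
    if A: "valid_arch Sig pout fout H W A" "numParams psize A \<le> p" for A
  proof
    have "{f. psize f \<le> numParams psize A} \<subseteq> {f. psize f \<le> p}"
      using A(2) by auto
    with valid_arch_set_subset[of pout fout Sig H W A psize] pool_shrink param_noinc A(1)
    show "set A \<subseteq> B"
      unfolding B_def by blast
    from valid_arch_length_less[of pout fout psize H Sig W A] pool_shrink param_noinc param_pos
      \<open>H > 0\<close> A
    show "length A \<le> 2 * (nat H + p)" by fastforce
  qed
  ultimately show ?thesis
    by (blast intro: finite_subset[OF _ finite_lists_length_le])
qed

end
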